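(* Let $k\ge3$, and let $\nu_0$ be an initial distribution of the $S_k$ shuffle on $\mathcal S_N$ such that $\sigma\mapsto\nu_0(\sigma)/\mu_N(\sigma)$ is increasing with respect to $\succeq$. Let $\mathcal C$ be a censoring scheme and let $\nu^{\mathcal C}_t$ be the law at time $t$ of the censored $S_k$ shuffle (with respect to $\mathcal C$) started from $\nu_0$. Then for every $t\ge0$ the function $\sigma\mapsto\nu^{\mathcal C}_t(\sigma)/\mu_N(\sigma)$ is increasing with respect to $\succeq$, and the censoring inequality holds: for every $t\ge0$ and every fixed realization of the update times, the law at time $t$ of the censored dynamics stochastically dominates (with respect to $\succeq$) the law at time $t$ of the uncensored $S_k$ shuffle, both started from $\nu_0$ and driven by these same update times.
   Context: $\mathcal S_N$ is the symmetric group on $[N]$, $\sigma(z)$ the label of the card at position $z$; $\mu_N$ the uniform measure. The $S_k$ shuffle: each block $\{i,\dots,i+k-1\}$, $1\le i\le N-k+1$, has an independent rate-1 Poisson clock (the update times); when it rings the cards in the block are rearranged by a uniform element of $\mathcal S_k$. Height function $h_\sigma(x,y)=\sum_{z=1}^x\mathbf 1\{\sigma(z)\le y\}-xy/N$; partial order: $\sigma\succeq\sigma'$ iff $h_\sigma(x,y)\ge h_{\sigma'}(x,y)$ for all $x,y\in[N]$. A function $f$ is increasing if $\sigma\succeq\sigma'$ implies $f(\sigma)\ge f(\sigma')$; a measure $\mu$ stochastically dominates $\nu$ if $\mu(A)\ge\nu(A)$ for every set $A$ that is increasing (upward closed) for $\succeq$. A censoring scheme is a càdlàg map $\mathcal C:[0,\infty)\to\mathcal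 P(E)$, $E=\{\{x,x+1\}:x\in[N-1]\}$. Censored dynamics: when at time $t$ the clock of an interval $\mathcal I=[i,j]$ rings, if no edge $\{x,x+1\}\in\mathcal C_t$ has both endpoints in $\mathcal I$, the cards in $\mathcal I$ are uniformly reshuffled as usual; otherwise $\mathcal I$ is split into the maximal subintervals $[i_m,i_{m+1}-1]$ separated by the censored edges $\{i_m-1,i_m\}\in\mathcal C_t$, and the cards in each subinterval are independently uniformly reshuffled within that subinterval. *)

theory Defs
  imports "HOL-Combinatorics.Permutations" Complex_Main
begin

text \<open>Arrangements of N cards: sigma z is the label of the card at position z.\<close>
definition perms :: "nat \<Rightarrow> (nat \<Rightarrow> nat) set" where
  "perms N = {\<sigma>. \<sigma> permutes {1..N}}"

definition mu :: "nat \<Rightarrow> (nat \<Rightarrow> nat) \<Rightarrow> real" where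
  "mu N \<sigma> = 1 / real (fact N)"

definition is_distribution :: "nat \<Rightarrow> ((nat \<Rightarrow> nat) \<Rightarrow> real) \<Rightarrow> bool" where
  "is_distribution N \<nu> \<longleftrightarrow> (\<forall>\<sigma>\<in>perms N. 0 \<le> \<nu> \<sigma>) \<and> (\<Sum>\<sigma>\<in>perms N. \<nu> \<sigma>) = 1"

definition height :: "nat \<Rightarrow> (nat \<Rightarrow> nat) \<Rightarrow> nat \<Rightarrow> nat \<Rightarrow> real" where
  "height N \<sigma> x y = real (card {z\<in>{1..x}. \<sigma> z \<le> y}) - real x * real y / real N"

definition succeq :: "nat \<Rightarrow> (nat \<Rightarrow> nat) \<Rightarrow> (nat \<Rightarrow> nat) \<Rightarrow> bool" where
  "succeq N \<sigma> \<sigma>' \<longleftrightarrow> (\<forall>x\<in>{1..N}. \<forall>y\<in>{1..N}. height N \<sigma> x y \<ge> height N \<sigma>' x y)"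

definition increasing_fun :: "nat \<Rightarrow> ((nat \<Rightarrow> nat) \<Rightarrow> real) \<Rightarrow> bool" where
  "increasing_fun N f \<longleftrightarrow>
     (\<forall>\<sigma>\<in>perms N. \<forall>\<sigma>'\<in>perms N. succeq N \<sigma> \<sigma>' \<longrightarrow> f \<sigma> \<ge> f \<sigma>')"

definition increasing_set :: "nat \<Rightarrow> (nat \<Rightarrow> nat) set \<Rightarrow> bool" where
  "increasing_set N A \<longleftrightarrow> A \<subseteq> perms N \<and>
     (\<forall>\<sigma>\<in>A. \<forall>\<sigma>'\<in>perms N. succeq N \<sigma>' \<sigma> \<longrightarrow> \<sigma>' \<in> A)"

definition stoch_dom :: "nat \<Rightarrow> ((nat \<Rightarrow> nat) \<Rightarrow> real) \<Rightarrow> ((nat \<Rightarrow> nat) \<Rightarrow> real) \<Rightarrow> bool" where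
  "stoch_dom N \<mu>' \<nu> \<longleftrightarrow>
     (\<forall>A. increasing_set N A \<longrightarrow> (\<Sum>\<sigma>\<in>A. \<mu>' \<sigma>) \<ge> (\<Sum>\<sigma>\<in>A. \<nu> \<sigma>))"

text \<open>Censoring schemes: the edge {x,x+1} is encoded by x; C t is a set of such x.
  Cadlag for a map into the discrete finite space P(E): right-continuous (locally constant
  to the right) with left limits (locally constant to the left).\<close>
definition censoring_scheme :: "nat \<Rightarrow> (real \<Rightarrow> nat set) \<Rightarrow> bool" where
  "censoring_scheme N C \<longleftrightarrow>
     (\<forall>t\<ge>0. C t \<subseteq> {1..<N}) \<and>
     (\<forall>t\<ge>0. \<exists>\<epsilon>>0. \<forall>s. t \<le> s \<and> s < t + \<epsilon> \<longrightarrow> C s = C t) \<and>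
     (\<forall>t>0. \<exists>\<epsilon>>0. \<exists>L. \<forall>s. t - \<epsilon> < s \<and> s < t \<longrightarrow> C s = L)"

definition block :: "nat \<Rightarrow> nat \<Rightarrow> nat set" where
  "block k i = {i..i + k - 1}"

text \<open>Two positions lie in the same maximal subinterval iff no censored edge separates them.\<close>
definition same_piece :: "nat set \<Rightarrow> nat \<Rightarrow> nat \<Rightarrow> bool" where
  "same_piece E a b \<longleftrightarrow> (\<forall>z. min a b \<le> z \<and> z < max a b \<longrightarrow> z \<notin> E)"

text \<open>Rearrangements used when the clock of block i rings while E is censored: uniform
  over the permutations of the block preserving each maximal subinterval (= independent
  uniform reshuffles of the subintervals; = uniform element of S_k if E cuts nothing).\<close>
definition shuffle_group :: "nat set \<Rightarrow> nat \<Rightarrow> nat \<Rightarrow> (nat \<Rightarrow> nat) set" where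
  "shuffle_group E k i = {\<pi>. \<pi> permutes block k i \<and> (\<forall>z\<in>block k i. same_piece E z (\<pi> z))}"

text \<open>One update of the law: the cards in positions of the block are rearranged by pi.\<close>
definition step :: "nat \<Rightarrow> nat set \<Rightarrow> nat \<Rightarrow> nat \<Rightarrow> ((nat \<Rightarrow> nat) \<Rightarrow> real) \<Rightarrow> (nat \<Rightarrow> nat) \<Rightarrow> real" where
  "step N E k i \<nu> \<tau> =
     (\<Sum>\<sigma>\<in>perms N. \<nu> \<sigma> * real (card {\<pi>\<in>shuffle_group E k i. \<tau> = \<sigma> \<circ> \<pi>})
                           / real (card (shuffle_group E k i)))"

text \<open>A realization of the update times: a finite list of (ring time, block index),
  strictly increasing in time (covers all rings up to any horizon).\<close>
definition update_times :: "nat \<Rightarrow> nat \<Rightarrow> (real \<times> nat) list \<Rightarrow> bool" where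
  "update_times N k us \<longleftrightarrow> sorted_wrt (\<lambda>a b. fst a < fst b) us \<and>
     (\<forall>u\<in>set us. 0 \<le> fst u \<and> 1 \<le> snd u \<and> snd u + k \<le> N + 1)"

definition law :: "nat \<Rightarrow> nat \<Rightarrow> (real \<Rightarrow> nat set) \<Rightarrow> ((nat \<Rightarrow> nat) \<Rightarrow> real)
                    \<Rightarrow> (real \<times> nat) list \<Rightarrow> real \<Rightarrow> (nat \<Rightarrow> nat) \<Rightarrow> real" where
  "law N k C \<nu>0 us t = foldl (\<lambda>\<nu> u. step N (C (fst u)) k (snd u) \<nu>) \<nu>0
                          (filter (\<lambda>u. fst u \<le> t) us)"

end

theory Submission
  imports Defs "HOL-Analysis.Analysis"
begin

text \<open>An update of block i with censored edges E replaces a law \<nu> by the function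
  \<sigma> \<mapsto> average of \<nu> (\<sigma> \<circ> \<pi>) over the group G of rearrangements \<pi> of the block that preserve
  the pieces cut out by E; the uncensored group contains every censored one.

  The core fact is that averaging an increasing function f over such a group keeps it increasing
  and lowers its mass on every increasing set. For a single adjacent transposition this follows by
  sorting the two swapped cards. For the whole group, the average is the G-invariant member of the
  compact class of increasing functions with the G-orbit sums of f that are dominated by f on
  increasing sets: a minimiser of the sum of squares in this class is invariant under every
  uncensored adjacent transposition, since averaging over one keeps it in the class and strictly
  lowers the sum of squares otherwise, and these transpositions generate G.

  Induction over the updates then gives both claims: the censored law stays increasing, and
  domination is preserved because the average over the uncensored group absorbs a preceding
  average over the censored one. As mu N is uniform, \<nu> / mu N is increasing iff \<nu> is.\<close>

section \<open>The height order and adjacent transpositions\<close>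

definition height_count :: "(nat \<Rightarrow> nat) \<Rightarrow> nat \<Rightarrow> nat \<Rightarrow> nat" where
  "height_count \<sigma> x y = card {z\<in>{1..x}. \<sigma> z \<le> y}"

lemma succeq_iff_height_count:
  "succeq N \<sigma> \<sigma>' \<longleftrightarrow> (\<forall>x\<in>{1..N}. \<forall>y\<in>{1..N}. height_count \<sigma>' x y \<le> height_count \<sigma> x y)"
  unfolding succeq_def height_def height_count_def by auto

lemma height_count_0 [simp]: "height_count \<sigma> 0 y = 0"
  unfolding height_count_def by auto

lemma height_count_Suc:
  "height_count \<sigma> (Suc x) y = height_count \<sigma> x y + (if \<sigma> (Suc x) \<le> y then 1 else 0)"
proof -
  have "{z\<in>{1..Suc x}. \<sigma> z \<le> y} =
        (if \<sigma> (Suc x) \<le> y then insert (Suc x) {z\<in>{1..x}. \<sigma> z \<le> y} else {z\<in>{1..x}. \<sigma> z \<le> y})"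
    by (auto simp: le_Suc_eq)
  then show ?thesis unfolding height_count_def by auto
qed

abbreviation adj_swap :: "nat \<Rightarrow> nat \<Rightarrow> nat" where
  "adj_swap z \<equiv> Transposition.transpose z (Suc z)"

lemma comp_adj_swap_involutive [simp]: "\<sigma> \<circ> adj_swap z \<circ> adj_swap z = \<sigma>"
  by (simp add: comp_assoc)

lemma height_count_comp_adj_swap:
  assumes "1 \<le> z" "x \<noteq> z"
  shows "height_count (\<sigma> \<circ> adj_swap z) x y = height_count \<sigma> x y"
proof -
  have mem: "adj_swap z w \<in> {1..x} \<longleftrightarrow> w \<in> {1..x}" for w
    using assms by (auto simp: Transposition.transpose_def)
  have "{w\<in>{1..x}. (\<sigma> \<circ> adj_swap z) w \<le> y} = adj_swap z ` {w\<in>{1..x}. \<sigma> w \<le> y}"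
  proof (intro set_eqI iffI)
    fix w assume "w \<in> {w\<in>{1..x}. (\<sigma> \<circ> adj_swap z) w \<le> y}"
    then have "adj_swap z w \<in> {w\<in>{1..x}. \<sigma> w \<le> y}" using mem by auto
    then show "w \<in> adj_swap z ` {w\<in>{1..x}. \<sigma> w \<le> y}"
      by (metis image_eqI transpose_involutory)
  next
    fix w assume "w \<in> adj_swap z ` {w\<in>{1..x}. \<sigma> w \<le> y}"
    then obtain v where v: "v \<in> {w\<in>{1..x}. \<sigma> w \<le> y}" "w = adj_swap z v" by auto
    then have "adj_swap z w = v" by simp
    then show "w \<in> {w\<in>{1..x}. (\<sigma> \<circ> adj_swap z) w \<le> y}" using v mem by auto
  qed
  moreover have "inj (adj_swap z)" by (metis inj_on_inverseI transpose_involutory)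
  ultimately show ?thesis unfolding height_count_def by (simp add: card_image inj_on_subset)
qed

definition ascend_at :: "nat \<Rightarrow> (nat \<Rightarrow> nat) \<Rightarrow> (nat \<Rightarrow> nat)" where
  "ascend_at z \<sigma> = (if \<sigma> z \<le> \<sigma> (Suc z) then \<sigma> else \<sigma> \<circ> adj_swap z)"

definition descend_at :: "nat \<Rightarrow> (nat \<Rightarrow> nat) \<Rightarrow> (nat \<Rightarrow> nat)" where
  "descend_at z \<sigma> = (if \<sigma> z \<le> \<sigma> (Suc z) then \<sigma> \<circ> adj_swap z else \<sigma>)"

lemma height_count_at_Suc:
  assumes "1 \<le> z"
  shows "height_count \<sigma> (Suc z) y =
    height_count \<sigma> (z - 1) y + (if \<sigma> z \<le> y then 1 else 0) + (if \<sigma> (Suc z) \<le> y then 1 else 0)"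
  using assms by (cases z) (simp_all add: height_count_Suc)

lemma height_count_at:
  assumes "1 \<le> z"
  shows "height_count \<sigma> z y = height_count \<sigma> (z - 1) y + (if \<sigma> z \<le> y then 1 else 0)"
  using assms by (cases z) (simp_all add: height_count_Suc)

text \<open>Sorting the two cards at positions z, z+1 increasingly (decreasingly) makes the height at z
  as large (small) as the heights at the neighbouring positions z-1 and z+1 allow.\<close>

lemma height_count_ascend_at:
  assumes "1 \<le> z"
  shows "height_count (ascend_at z \<sigma>) z y =
    min (height_count \<sigma> (z - 1) y + 1) (height_count \<sigma> (Suc z) y)"
proof -
  have "height_count (ascend_at z \<sigma>) (z - 1) y = height_count \<sigma> (z - 1) y"
    using assms by (simp add: ascend_at_def height_count_comp_adj_swap)
  then show ?thesis
    using assms unfolding height_count_at[OF assms, of "ascend_at z \<sigma>"] height_count_at_Suc[OF assms]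
    by (auto simp: ascend_at_def)
qed

lemma height_count_descend_at:
  assumes "1 \<le> z"
  shows "height_count (descend_at z \<sigma>) z y =
    max (height_count \<sigma> (z - 1) y) (height_count \<sigma> (Suc z) y - 1)"
proof -
  have "height_count (descend_at z \<sigma>) (z - 1) y = height_count \<sigma> (z - 1) y"
    using assms by (simp add: descend_at_def height_count_comp_adj_swap)
  then show ?thesis
    using assms unfolding height_count_at[OF assms, of "descend_at z \<sigma>"] height_count_at_Suc[OF assms]
    by (auto simp: descend_at_def)
qed

lemma height_count_below_le:
  assumes "succeq N \<sigma> \<sigma>'" "1 \<le> z" "z \<le> N" "y \<in> {1..N}"
  shows "height_count \<sigma>' (z - 1) y \<le> height_count \<sigma> (z - 1) y"
proof (cases "z = 1")
  case False
  then have "z - 1 \<in> {1..N}" using assms(2,3) by auto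
  then show ?thesis using assms(1,4) unfolding succeq_iff_height_count by blast
qed simp

lemma succeq_by_height_count_at:
  assumes "\<And>x y. x \<in> {1..N} \<Longrightarrow> y \<in> {1..N} \<Longrightarrow> x \<noteq> z \<Longrightarrow> height_count \<sigma>' x y \<le> height_count \<sigma> x y"
    and "\<And>y. y \<in> {1..N} \<Longrightarrow> height_count \<sigma>' z y \<le> height_count \<sigma> z y"
  shows "succeq N \<sigma> \<sigma>'"
  using assms unfolding succeq_iff_height_count by (metis)

lemma succeq_ascend_at:
  assumes "succeq N \<sigma> \<sigma>'" "1 \<le> z" "Suc z \<le> N"
  shows "succeq N (ascend_at z \<sigma>) (ascend_at z \<sigma>')"
proof (rule succeq_by_height_count_at)
  fix y assume y: "y \<in> {1..N}"
  have "height_count \<sigma>' (Suc z) y \<le> height_count \<sigma> (Suc z) y"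
    using assms y by (auto simp: succeq_iff_height_count)
  with height_count_below_le[OF assms(1,2) _ y] assms(3)
  show "height_count (ascend_at z \<sigma>') z y \<le> height_count (ascend_at z \<sigma>) z y"
    unfolding height_count_ascend_at[OF assms(2)] by linarith
qed (use assms in \<open>auto simp: ascend_at_def height_count_comp_adj_swap succeq_iff_height_count\<close>)

lemma succeq_descend_at:
  assumes "succeq N \<sigma> \<sigma>'" "1 \<le> z" "Suc z \<le> N"
  shows "succeq N (descend_at z \<sigma>) (descend_at z \<sigma>')"
proof (rule succeq_by_height_count_at)
  fix y assume y: "y \<in> {1..N}"
  have "height_count \<sigma>' (Suc z) y \<le> height_count \<sigma> (Suc z) y"
    using assms y by (auto simp: succeq_iff_height_count)
  with height_count_below_le[OF assms(1,2) _ y] assms(3)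
  show "height_count (descend_at z \<sigma>') z y \<le> height_count (descend_at z \<sigma>) z y"
    unfolding height_count_descend_at[OF assms(2)] by linarith
qed (use assms in \<open>auto simp: descend_at_def height_count_comp_adj_swap succeq_iff_height_count\<close>)

lemma succeq_ascend_descend_at:
  assumes "1 \<le> z"
  shows "succeq N (ascend_at z \<sigma>) (descend_at z \<sigma>)"
proof (rule succeq_by_height_count_at)
  show "height_count (descend_at z \<sigma>) z y \<le> height_count (ascend_at z \<sigma>) z y" for y
    using height_count_at_Suc[OF assms, of \<sigma> y]
    unfolding height_count_ascend_at[OF assms] height_count_descend_at[OF assms] by auto
qed (use assms in \<open>auto simp: ascend_at_def descend_at_def height_count_comp_adj_swap\<close>)

lemma succeq_adj_swap_comparable:
  assumes "1 \<le> z"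
  shows "succeq N \<sigma> (\<sigma> \<circ> adj_swap z) \<or> succeq N (\<sigma> \<circ> adj_swap z) \<sigma>"
  using succeq_ascend_descend_at[OF assms, of N \<sigma>]
  unfolding ascend_at_def descend_at_def by (auto split: if_splits)

section \<open>Averaging over one adjacent transposition\<close>

lemma finite_perms: "finite (perms N)"
  unfolding perms_def using finite_permutations[of "{1..N}"] by simp

lemma comp_in_perms: "\<sigma> \<in> perms N \<Longrightarrow> \<rho> permutes {1..N} \<Longrightarrow> \<sigma> \<circ> \<rho> \<in> perms N"
  unfolding perms_def by (auto intro: permutes_compose)

lemma adj_swap_permutes: "1 \<le> z \<Longrightarrow> Suc z \<le> N \<Longrightarrow> adj_swap z permutes {1..N}"
  by (rule permutes_swap_id) auto

lemma comp_adj_swap_in_perms_iff: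
  assumes "1 \<le> z" "Suc z \<le> N"
  shows "\<sigma> \<circ> adj_swap z \<in> perms N \<longleftrightarrow> \<sigma> \<in> perms N"
  using comp_in_perms[OF _ adj_swap_permutes[OF assms], of \<sigma>]
    comp_in_perms[OF _ adj_swap_permutes[OF assms], of "\<sigma> \<circ> adj_swap z"] by auto

lemma sum_perms_comp:
  assumes "\<rho> permutes {1..N}"
  shows "(\<Sum>\<sigma>\<in>perms N. g (\<sigma> \<circ> \<rho>)) = (\<Sum>\<sigma>\<in>perms N. g \<sigma>)"
proof (rule sum.reindex_bij_witness[of _ "\<lambda>\<sigma>. \<sigma> \<circ> inv \<rho>" "\<lambda>\<sigma>. \<sigma> \<circ> \<rho>"])
  fix \<sigma> assume "\<sigma> \<in> perms N"
  then show "\<sigma> \<circ> inv \<rho> \<circ> \<rho> = \<sigma>" "\<sigma> \<circ> inv \<rho> \<in> perms N" "\<sigma> \<circ> \<rho> \<circ> inv \<rho> = \<sigma>" "\<sigma> \<circ> \<rho> \<in> perms N"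
    using permutes_inv_o[OF assms] comp_in_perms[OF _ permutes_inv[OF assms]] comp_in_perms[OF _ assms]
    by (auto simp: comp_assoc)
qed simp

definition swap_avg :: "nat \<Rightarrow> ((nat \<Rightarrow> nat) \<Rightarrow> real) \<Rightarrow> (nat \<Rightarrow> nat) \<Rightarrow> real" where
  "swap_avg z f \<sigma> = (f \<sigma> + f (\<sigma> \<circ> adj_swap z)) / 2"

lemma swap_avg_eq_ascend_descend_at:
  "swap_avg z f \<sigma> = (f (ascend_at z \<sigma>) + f (descend_at z \<sigma>)) / 2"
  unfolding swap_avg_def ascend_at_def descend_at_def by auto

lemma increasing_swap_avg:
  assumes f: "increasing_fun N f" and z: "1 \<le> z" "Suc z \<le> N"
  shows "increasing_fun N (swap_avg z f)"
  unfolding increasing_fun_def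
proof (intro ballI impI)
  fix \<sigma> \<sigma>' assume \<sigma>: "\<sigma> \<in> perms N" "\<sigma>' \<in> perms N" and le: "succeq N \<sigma> \<sigma>'"
  have "ascend_at z \<rho> \<in> perms N" "descend_at z \<rho> \<in> perms N" if "\<rho> \<in> perms N" for \<rho>
    using that comp_adj_swap_in_perms_iff[OF z] by (auto simp: ascend_at_def descend_at_def)
  with \<sigma> f succeq_ascend_at[OF le z] succeq_descend_at[OF le z]
  have "f (ascend_at z \<sigma>') \<le> f (ascend_at z \<sigma>)" "f (descend_at z \<sigma>') \<le> f (descend_at z \<sigma>)"
    unfolding increasing_fun_def by blast+
  then show "swap_avg z f \<sigma>' \<le> swap_avg z f \<sigma>"
    unfolding swap_avg_eq_ascend_descend_at by simp
qed

text \<open>On an increasing set S, the pairs {\<sigma>, \<sigma> \<circ> adj_swap z} inside S contribute equally to both sums;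
  a \<sigma> \<in> S whose partner leaves S lies above it, so moving mass to the partner loses mass.\<close>

lemma sum_swap_avg_le:
  assumes f: "increasing_fun N f" and S: "increasing_set N S" and z: "1 \<le> z" "Suc z \<le> N"
  shows "sum (swap_avg z f) S \<le> sum f S"
proof -
  have SP: "S \<subseteq> perms N" using S unfolding increasing_set_def by auto
  then have fin: "finite S" using finite_perms finite_subset by blast
  define S1 where "S1 = {\<sigma>\<in>S. \<sigma> \<circ> adj_swap z \<in> S}"
  define S2 where "S2 = {\<sigma>\<in>S. \<sigma> \<circ> adj_swap z \<notin> S}"
  have split: "S = S1 \<union> S2" "S1 \<inter> S2 = {}" and fin12: "finite S1" "finite S2"
    using fin unfolding S1_def S2_def by auto
  have "(\<Sum>\<sigma>\<in>S1. f (\<sigma> \<circ> adj_swap z)) = (\<Sum>\<sigma>\<in>S1. f \<sigma>)"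
    by (rule sum.reindex_bij_witness[of _ "\<lambda>\<sigma>. \<sigma> \<circ> adj_swap z" "\<lambda>\<sigma>. \<sigma> \<circ> adj_swap z"])
       (auto simp: S1_def)
  moreover have "(\<Sum>\<sigma>\<in>S2. f (\<sigma> \<circ> adj_swap z)) \<le> (\<Sum>\<sigma>\<in>S2. f \<sigma>)"
  proof (rule sum_mono)
    fix \<sigma> assume "\<sigma> \<in> S2"
    then have \<sigma>: "\<sigma> \<in> S" "\<sigma> \<circ> adj_swap z \<notin> S" unfolding S2_def by auto
    then have P: "\<sigma> \<in> perms N" "\<sigma> \<circ> adj_swap z \<in> perms N"
      using SP comp_adj_swap_in_perms_iff[OF z] by auto
    then have "\<not> succeq N (\<sigma> \<circ> adj_swap z) \<sigma>" using \<sigma> S unfolding increasing_set_def by blast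
    then have "succeq N \<sigma> (\<sigma> \<circ> adj_swap z)" using succeq_adj_swap_comparable[OF z(1)] by blast
    then show "f (\<sigma> \<circ> adj_swap z) \<le> f \<sigma>" using f P unfolding increasing_fun_def by blast
  qed
  ultimately have "(\<Sum>\<sigma>\<in>S. f (\<sigma> \<circ> adj_swap z)) \<le> (\<Sum>\<sigma>\<in>S. f \<sigma>)"
    using split fin12 by (simp add: sum.union_disjoint)
  then show ?thesis
    unfolding swap_avg_def by (simp add: sum_divide_distrib[symmetric] sum.distrib)
qed

lemma sum_squares_swap_avg:
  assumes "1 \<le> z" "Suc z \<le> N"
  shows "4 * (\<Sum>\<sigma>\<in>perms N. (swap_avg z h \<sigma>)\<^sup>2) + (\<Sum>\<sigma>\<in>perms N. (h \<sigma> - h (\<sigma> \<circ> adj_swap z))\<^sup>2)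
       = 4 * (\<Sum>\<sigma>\<in>perms N. (h \<sigma>)\<^sup>2)"
proof -
  have pw: "4 * (swap_avg z h \<sigma>)\<^sup>2 + (h \<sigma> - h (\<sigma> \<circ> adj_swap z))\<^sup>2
      = 2 * (h \<sigma>)\<^sup>2 + 2 * (h (\<sigma> \<circ> adj_swap z))\<^sup>2" for \<sigma>
    unfolding swap_avg_def by (simp add: power2_eq_square algebra_simps)
  have swap: "(\<Sum>\<sigma>\<in>perms N. (h (\<sigma> \<circ> adj_swap z))\<^sup>2) = (\<Sum>\<sigma>\<in>perms N. (h \<sigma>)\<^sup>2)"
    by (rule sum_perms_comp[OF adj_swap_permutes[OF assms]])
  have "4 * (\<Sum>\<sigma>\<in>perms N. (swap_avg z h \<sigma>)\<^sup>2) + (\<Sum>\<sigma>\<in>perms N. (h \<sigma> - h (\<sigma> \<circ> adj_swap z))\<^sup>2)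
      = (\<Sum>\<sigma>\<in>perms N. 2 * (h \<sigma>)\<^sup>2 + 2 * (h (\<sigma> \<circ> adj_swap z))\<^sup>2)"
    by (simp add: sum_distrib_left sum.distrib[symmetric] pw)
  also have "\<dots> = 4 * (\<Sum>\<sigma>\<in>perms N. (h \<sigma>)\<^sup>2)"
    by (simp add: sum.distrib swap flip: sum_distrib_left)
  finally show ?thesis .
qed

section \<open>The shuffle group of a block\<close>

lemma same_piece_sym: "same_piece E a b \<Longrightarrow> same_piece E b a"
  unfolding same_piece_def by (auto simp: min.commute max.commute)

lemma same_piece_trans:
  assumes "same_piece E a b" "same_piece E b c"
  shows "same_piece E a c"
proof -
  have "min a c \<le> z \<and> z < max a c \<Longrightarrow>
      (min a b \<le> z \<and> z < max a b) \<or> (min b c \<le> z \<and> z < max b c)" for z :: nat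
    by arith
  then show ?thesis using assms unfolding same_piece_def by blast
qed

lemma exists_descent_between:
  fixes \<pi> :: "nat \<Rightarrow> nat"
  assumes "a < b" "\<pi> b < \<pi> a"
  shows "\<exists>z. a \<le> z \<and> z < b \<and> \<pi> (Suc z) < \<pi> z"
  using assms
proof (induction b)
  case (Suc b)
  show ?case
  proof (cases "\<pi> (Suc b) < \<pi> b")
    case False
    with Suc.prems have "a < b" by (metis less_Suc_eq)
    with Suc.IH Suc.prems False show ?thesis by (metis less_SucI not_less_iff_gr_or_eq order_less_trans)
  qed (use Suc.prems in \<open>auto intro!: exI[of _ b]\<close>)
qed simp

lemma continuous_on_coordinate: "continuous_on S (\<lambda>h. h x :: 'b::topological_space)"
  by (rule continuous_on_subset[OF continuous_on_product_coordinates]) simp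

definition group_avg :: "(nat \<Rightarrow> nat) set \<Rightarrow> ((nat \<Rightarrow> nat) \<Rightarrow> real) \<Rightarrow> (nat \<Rightarrow> nat) \<Rightarrow> real" where
  "group_avg G f \<sigma> = (\<Sum>\<pi>\<in>G. f (\<sigma> \<circ> \<pi>)) / real (card G)"

lemma real_card_filter_eq_sum:
  "finite A \<Longrightarrow> real (card {x\<in>A. Q x}) = (\<Sum>x\<in>A. if Q x then 1 else 0)"
  by (simp add: sum.inter_filter[symmetric])

locale block_shuffle =
  fixes N k i :: nat and E :: "nat set"
  assumes block_start: "1 \<le> i" and block_end: "i + k \<le> N + 1"
begin

abbreviation "B \<equiv> block k i"
abbreviation "G \<equiv> shuffle_group E k i"

lemma finite_block: "finite B"
  by (simp add: block_def)

lemma block_subset: "B \<subseteq> {1..N}"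
  using block_start block_end unfolding block_def by auto

lemma shuffle_group_permutes_block: "\<pi> \<in> G \<Longrightarrow> \<pi> permutes B"
  unfolding shuffle_group_def by auto

lemma shuffle_group_permutes: "\<pi> \<in> G \<Longrightarrow> \<pi> permutes {1..N}"
  using shuffle_group_permutes_block block_subset permutes_subset by blast

lemma id_in_shuffle_group: "id \<in> G"
  unfolding shuffle_group_def same_piece_def by auto

lemma inv_in_shuffle_group:
  assumes "\<pi> \<in> G"
  shows "inv \<pi> \<in> G"
proof -
  have \<pi>: "\<pi> permutes B" using assms shuffle_group_permutes_block by auto
  have "same_piece E z (inv \<pi> z)" if "z \<in> B" for z
  proof -
    have "inv \<pi> z \<in> B" using permutes_in_image[OF permutes_inv[OF \<pi>]] that by simp
    then have "same_piece E (inv \<pi> z) (\<pi> (inv \<pi> z))" using assms unfolding shuffle_group_def by auto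
    then show ?thesis using permutes_inverses(1)[OF \<pi>, of z] same_piece_sym by simp
  qed
  then show ?thesis unfolding shuffle_group_def using permutes_inv[OF \<pi>] by auto
qed

lemma comp_in_shuffle_group:
  assumes "\<pi> \<in> G" "\<rho> \<in> G"
  shows "\<pi> \<circ> \<rho> \<in> G"
proof -
  have \<pi>\<rho>: "\<pi> permutes B" "\<rho> permutes B" using assms shuffle_group_permutes_block by auto
  have "same_piece E z (\<pi> (\<rho> z))" if "z \<in> B" for z
  proof -
    have "\<rho> z \<in> B" using permutes_in_image[OF \<pi>\<rho>(2)] that by simp
    then show ?thesis
      using assms that same_piece_trans unfolding shuffle_group_def by blast
  qed
  then show ?thesis unfolding shuffle_group_def using permutes_compose[OF \<pi>\<rho>(2,1)] by auto
qed

lemma finite_shuffle_group: "finite G"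
  by (rule finite_subset[OF _ finite_permutations[OF finite_block]])
     (auto simp: shuffle_group_def)

lemma card_shuffle_group_pos: "card G > 0"
  using finite_shuffle_group id_in_shuffle_group card_gt_0_iff by blast

lemma comp_shuffle_in_perms: "\<sigma> \<in> perms N \<Longrightarrow> \<pi> \<in> G \<Longrightarrow> \<sigma> \<circ> \<pi> \<in> perms N"
  using comp_in_perms shuffle_group_permutes by blast

lemma adj_swap_in_shuffle_group:
  assumes "z \<in> B" "Suc z \<in> B" "z \<notin> E"
  shows "adj_swap z \<in> G"
proof -
  have "same_piece E z (Suc z)" using assms unfolding same_piece_def by (auto simp: less_Suc_eq_le)
  then have "same_piece E w (adj_swap z w)" for w
    by (cases "w = z"; cases "w = Suc z") (auto simp: same_piece_sym same_piece_def)
  then show ?thesis unfolding shuffle_group_def using permutes_swap_id[OF assms(1,2)] by auto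
qed

text \<open>The smallest point a moved by \<pi> is moved up, and the preimage b > a of a is moved down to a;
  a descent between a and b cannot sit on a censored edge, since \<pi> keeps both sides of it in place.\<close>

lemma shuffle_group_descent:
  assumes "\<pi> \<in> G" "\<pi> \<noteq> id"
  obtains z where "z \<in> B" "Suc z \<in> B" "z \<notin> E" "\<pi> (Suc z) < \<pi> z"
proof -
  have \<pi>: "\<pi> permutes B" using assms shuffle_group_permutes_block by auto
  define M where "M = {w. \<pi> w \<noteq> w}"
  have MB: "M \<subseteq> B" unfolding M_def using permutes_not_in[OF \<pi>] by auto
  define a where "a = Min M"
  have "M \<noteq> {}" using assms(2) unfolding M_def by auto
  then have aM: "a \<in> M" and amin: "\<And>w. w \<in> M \<Longrightarrow> a \<le> w"
    using finite_subset[OF MB finite_block] unfolding a_def by auto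
  have "\<not> \<pi> a < a"
  proof
    assume "\<pi> a < a"
    then have "\<pi> (\<pi> a) = \<pi> a" using amin unfolding M_def by force
    then show False using aM permutes_inj[OF \<pi>] unfolding M_def by (auto dest: injD)
  qed
  then have "a < \<pi> a" using aM unfolding M_def by auto
  define b where "b = inv \<pi> a"
  have pb: "\<pi> b = a" unfolding b_def using permutes_inverses(1)[OF \<pi>] by simp
  have "b \<noteq> a" using pb aM unfolding M_def by auto
  moreover have "a \<le> b" using amin[of b] pb \<open>b \<noteq> a\<close> unfolding M_def by auto
  ultimately have "a < b" by simp
  have aB: "a \<in> B" using aM MB by auto
  have bB: "b \<in> B" using pb aB permutes_in_image[OF \<pi>, of b] by simp
  obtain z where z: "a \<le> z" "z < b" "\<pi> (Suc z) < \<pi> z"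
    using exists_descent_between[OF \<open>a < b\<close>, of \<pi>] pb \<open>a < \<pi> a\<close> by auto
  have zB: "z \<in> B" "Suc z \<in> B" using z aB bB by (auto simp: block_def)
  have "z \<notin> E"
  proof
    assume "z \<in> E"
    moreover have "same_piece E z (\<pi> z)" "same_piece E (Suc z) (\<pi> (Suc z))"
      using assms(1) zB unfolding shuffle_group_def by auto
    ultimately have "\<not> z < \<pi> z" "\<not> \<pi> (Suc z) < Suc z"
      unfolding same_piece_def by force+
    then show False using z by auto
  qed
  then show ?thesis using that zB z by blast
qed

definition position_weight :: "(nat \<Rightarrow> nat) \<Rightarrow> nat" where
  "position_weight \<pi> = (\<Sum>w\<in>B. w * \<pi> w)"

lemma position_weight_comp_adj_swap:
  assumes "z \<in> B" "Suc z \<in> B"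
  shows "position_weight (\<pi> \<circ> adj_swap z) + \<pi> (Suc z) = position_weight \<pi> + \<pi> z"
proof -
  have split: "sum g B = g z + g (Suc z) + sum g (B - {z, Suc z})" for g :: "nat \<Rightarrow> nat"
  proof -
    have "sum g (B - {z}) = g (Suc z) + sum g (B - {z} - {Suc z})"
      using assms finite_block by (intro sum.remove) auto
    then show ?thesis
      using assms finite_block by (simp add: sum.remove Diff_insert2 [symmetric] add.assoc)
  qed
  have "(\<Sum>w\<in>B - {z, Suc z}. w * (\<pi> \<circ> adj_swap z) w) = (\<Sum>w\<in>B - {z, Suc z}. w * \<pi> w)"
    by (rule sum.cong) auto
  then show ?thesis
    unfolding position_weight_def split[of "\<lambda>w. w * (\<pi> \<circ> adj_swap z) w"] split[of "\<lambda>w. w * \<pi> w"]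
    by (simp add: algebra_simps)
qed

lemma position_weight_le: "\<pi> \<in> G \<Longrightarrow> position_weight \<pi> \<le> (\<Sum>w\<in>B. w * (i + k))"
  unfolding position_weight_def
proof (rule sum_mono)
  fix w assume "\<pi> \<in> G" "w \<in> B"
  then have "\<pi> w \<in> B" using permutes_in_image[OF shuffle_group_permutes_block] by simp
  then show "w * \<pi> w \<le> w * (i + k)" by (auto simp: block_def)
qed

text \<open>The uncensored adjacent transpositions generate G: composing a non-identity element with the
  transposition at one of its descents strictly increases its (bounded) position weight.\<close>

lemma invariant_under_shuffle_group:
  assumes adj_inv: "\<And>\<sigma> z. \<sigma> \<in> perms N \<Longrightarrow> z \<in> B \<Longrightarrow> Suc z \<in> B \<Longrightarrow> z \<notin> E \<Longrightarrow> h (\<sigma> \<circ> adj_swap z) = h \<sigma>"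
    and "\<pi> \<in> G" "\<sigma> \<in> perms N"
  shows "h (\<sigma> \<circ> \<pi>) = h \<sigma>"
  using assms(2,3)
proof (induction "(\<Sum>w\<in>B. w * (i + k)) - position_weight \<pi>" arbitrary: \<pi> \<sigma> rule: less_induct)
  case less
  show ?case
  proof (cases "\<pi> = id")
    case False
    then obtain z where z: "z \<in> B" "Suc z \<in> B" "z \<notin> E" "\<pi> (Suc z) < \<pi> z"
      using shuffle_group_descent[OF less.prems(1)] by blast
    define \<pi>' where "\<pi>' = \<pi> \<circ> adj_swap z"
    have \<pi>': "\<pi>' \<in> G"
      unfolding \<pi>'_def by (rule comp_in_shuffle_group[OF less.prems(1) adj_swap_in_shuffle_group[OF z(1-3)]])
    have "position_weight \<pi> < position_weight \<pi>'"
      using position_weight_comp_adj_swap[OF z(1,2), of \<pi>] z(4) unfolding \<pi>'_def by linarith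
    with position_weight_le[OF \<pi>'] have "h (\<sigma> \<circ> \<pi>') = h \<sigma>"
      using less.hyps[OF _ \<pi>' less.prems(2)] by linarith
    moreover have "h (\<sigma> \<circ> \<pi>) = h (\<sigma> \<circ> \<pi>')"
      using adj_inv[OF comp_shuffle_in_perms[OF less.prems(2) \<pi>'] z(1-3)]
      unfolding \<pi>'_def by (simp add: comp_assoc)
    ultimately show ?thesis by simp
  qed simp
qed

section \<open>Averaging over the shuffle group\<close>

text \<open>Increasing functions with the G-orbit sums of f whose mass on every increasing set is at
  most that of f; the box constraint only serves compactness.\<close>

definition averaging_candidates :: "((nat \<Rightarrow> nat) \<Rightarrow> real) \<Rightarrow> ((nat \<Rightarrow> nat) \<Rightarrow> real) set" where
  "averaging_candidates f = {h.
     (\<forall>\<sigma>. h \<sigma> \<in> (if \<sigma> \<in> perms N then {Min (f ` perms N)..Max (f ` perms N)} else {0})) \<and>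
     increasing_fun N h \<and> (\<forall>S. increasing_set N S \<longrightarrow> sum h S \<le> sum f S) \<and>
     (\<forall>\<sigma>\<in>perms N. (\<Sum>\<pi>\<in>G. h (\<sigma> \<circ> \<pi>)) = (\<Sum>\<pi>\<in>G. f (\<sigma> \<circ> \<pi>)))}"

lemma compact_averaging_candidates: "compact (averaging_candidates f)"
proof -
  define box where
    "box \<sigma> = (if \<sigma> \<in> perms N then {Min (f ` perms N)..Max (f ` perms N)} else {0})" for \<sigma>
  have "compactin (product_topology (\<lambda>_. euclidean) UNIV) (PiE UNIV box)"
    by (subst compactin_PiE) (auto simp: box_def)
  then have "compact (PiE UNIV box)" by (simp add: euclidean_product_topology)
  moreover have "closed {h::(nat \<Rightarrow> nat) \<Rightarrow> real.
      \<forall>\<sigma> \<sigma>'. \<sigma> \<in> perms N \<and> \<sigma>' \<in> perms N \<and> succeq N \<sigma> \<sigma>' \<longrightarrow> h \<sigma>' \<le> h \<sigma>}"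
    by (intro closed_Collect_all closed_Collect_imp open_Collect_const closed_Collect_le
        continuous_on_coordinate)
  moreover have "closed {h. \<forall>S. increasing_set N S \<longrightarrow> sum h S \<le> sum f S}"
    by (intro closed_Collect_all closed_Collect_imp open_Collect_const closed_Collect_le
        continuous_on_sum continuous_on_coordinate continuous_on_const)
  moreover have "closed {h. \<forall>\<sigma>. \<sigma> \<in> perms N \<longrightarrow> (\<Sum>\<pi>\<in>G. h (\<sigma> \<circ> \<pi>)) = (\<Sum>\<pi>\<in>G. f (\<sigma> \<circ> \<pi>))}"
    by (intro closed_Collect_all closed_Collect_imp open_Collect_const closed_Collect_eq
        continuous_on_sum continuous_on_coordinate continuous_on_const)
  moreover have "averaging_candidates f = PiE UNIV box
      \<inter> {h. \<forall>\<sigma> \<sigma>'. \<sigma> \<in> perms N \<and> \<sigma>' \<in> perms N \<and> succeq N \<sigma> \<sigma>' \<longrightarrow> h \<sigma>' \<le> h \<sigma>}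
      \<inter> {h. \<forall>S. increasing_set N S \<longrightarrow> sum h S \<le> sum f S}
      \<inter> {h. \<forall>\<sigma>. \<sigma> \<in> perms N \<longrightarrow> (\<Sum>\<pi>\<in>G. h (\<sigma> \<circ> \<pi>)) = (\<Sum>\<pi>\<in>G. f (\<sigma> \<circ> \<pi>))}"
    unfolding averaging_candidates_def increasing_fun_def box_def [symmetric] by (auto simp: PiE_iff)
  ultimately show ?thesis by (simp add: compact_Int_closed)
qed

lemma restriction_in_averaging_candidates:
  assumes "increasing_fun N f"
  shows "(\<lambda>\<sigma>. if \<sigma> \<in> perms N then f \<sigma> else 0) \<in> averaging_candidates f"
proof -
  have "sum (\<lambda>\<sigma>. if \<sigma> \<in> perms N then f \<sigma> else 0) S = sum f S" if "increasing_set N S" for S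
    using that unfolding increasing_set_def by (auto intro!: sum.cong)
  moreover have "(\<Sum>\<pi>\<in>G. if \<sigma> \<circ> \<pi> \<in> perms N then f (\<sigma> \<circ> \<pi>) else 0) = (\<Sum>\<pi>\<in>G. f (\<sigma> \<circ> \<pi>))"
    if "\<sigma> \<in> perms N" for \<sigma>
    using comp_shuffle_in_perms[OF that] by (auto intro!: sum.cong)
  ultimately show ?thesis
    using assms finite_perms unfolding averaging_candidates_def increasing_fun_def by auto
qed

lemma swap_avg_in_averaging_candidates:
  assumes h: "h \<in> averaging_candidates f" and z: "z \<in> B" "Suc z \<in> B" "z \<notin> E"
  shows "swap_avg z h \<in> averaging_candidates f"
proof -
  have z1: "1 \<le> z" "Suc z \<le> N" using z block_subset by auto
  have h_box: "h \<rho> \<in> (if \<rho> \<in> perms N then {Min (f ` perms N)..Max (f ` perms N)} else {0})"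
    and h_inc: "increasing_fun N h"
    and h_dom: "\<And>S. increasing_set N S \<Longrightarrow> sum h S \<le> sum f S"
    and h_orb: "\<And>\<sigma>. \<sigma> \<in> perms N \<Longrightarrow> (\<Sum>\<pi>\<in>G. h (\<sigma> \<circ> \<pi>)) = (\<Sum>\<pi>\<in>G. f (\<sigma> \<circ> \<pi>))" for \<rho>
    using h unfolding averaging_candidates_def by blast+
  have "swap_avg z h \<sigma> \<in> (if \<sigma> \<in> perms N then {Min (f ` perms N)..Max (f ` perms N)} else {0})" for \<sigma>
    using h_box[of \<sigma>] h_box[of "\<sigma> \<circ> adj_swap z"]
    unfolding swap_avg_def comp_adj_swap_in_perms_iff[OF z1] by (auto split: if_splits)
  moreover have "increasing_fun N (swap_avg z h)" using increasing_swap_avg[OF h_inc z1] .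
  moreover have "sum (swap_avg z h) S \<le> sum f S" if "increasing_set N S" for S
    using sum_swap_avg_le[OF h_inc that z1] h_dom[OF that] by linarith
  moreover have "(\<Sum>\<pi>\<in>G. swap_avg z h (\<sigma> \<circ> \<pi>)) = (\<Sum>\<pi>\<in>G. f (\<sigma> \<circ> \<pi>))" if "\<sigma> \<in> perms N" for \<sigma>
  proof -
    have "(\<Sum>\<pi>\<in>G. h (\<sigma> \<circ> (\<pi> \<circ> adj_swap z))) = (\<Sum>\<pi>\<in>G. h (\<sigma> \<circ> \<pi>))"
      using adj_swap_in_shuffle_group[OF z]
      by (intro sum.reindex_bij_witness[of _ "\<lambda>\<pi>. \<pi> \<circ> adj_swap z" "\<lambda>\<pi>. \<pi> \<circ> adj_swap z"])
         (auto intro: comp_in_shuffle_group)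
    then have "(\<Sum>\<pi>\<in>G. swap_avg z h (\<sigma> \<circ> \<pi>)) = (\<Sum>\<pi>\<in>G. h (\<sigma> \<circ> \<pi>))"
      unfolding swap_avg_def by (simp add: comp_assoc sum.distrib flip: sum_divide_distrib)
    then show ?thesis using h_orb[OF that] by simp
  qed
  ultimately show ?thesis unfolding averaging_candidates_def by blast
qed

lemma sum_squares_minimiser_invariant:
  assumes h: "h \<in> averaging_candidates f"
    and minimal: "\<And>h'. h' \<in> averaging_candidates f \<Longrightarrow>
      (\<Sum>\<rho>\<in>perms N. (h \<rho>)\<^sup>2) \<le> (\<Sum>\<rho>\<in>perms N. (h' \<rho>)\<^sup>2)"
    and \<sigma>: "\<sigma> \<in> perms N" and z: "z \<in> B" "Suc z \<in> B" "z \<notin> E"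
  shows "h (\<sigma> \<circ> adj_swap z) = h \<sigma>"
proof -
  have z1: "1 \<le> z" "Suc z \<le> N" using z block_subset by auto
  have "(\<Sum>\<rho>\<in>perms N. (h \<rho> - h (\<rho> \<circ> adj_swap z))\<^sup>2) \<le> 0"
    using sum_squares_swap_avg[OF z1, of h] minimal[OF swap_avg_in_averaging_candidates[OF h z]]
    by linarith
  then have "(\<Sum>\<rho>\<in>perms N. (h \<rho> - h (\<rho> \<circ> adj_swap z))\<^sup>2) = 0"
    by (meson order_antisym sum_nonneg zero_le_power2)
  then have "\<forall>\<rho>\<in>perms N. (h \<rho> - h (\<rho> \<circ> adj_swap z))\<^sup>2 = 0"
    by (simp add: sum_nonneg_eq_0_iff[OF finite_perms])
  then show ?thesis using \<sigma> by simp
qed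

lemma exists_averaging_candidate_eq_group_avg:
  assumes "increasing_fun N f"
  obtains h where "h \<in> averaging_candidates f"
    and "\<And>\<sigma>. \<sigma> \<in> perms N \<Longrightarrow> group_avg G f \<sigma> = h \<sigma>"
proof -
  have "continuous_on (averaging_candidates f) (\<lambda>h. \<Sum>\<rho>\<in>perms N. (h \<rho>)\<^sup>2)"
    by (intro continuous_intros continuous_on_coordinate)
  then obtain h where h: "h \<in> averaging_candidates f"
    and minimal: "\<And>h'. h' \<in> averaging_candidates f \<Longrightarrow>
      (\<Sum>\<rho>\<in>perms N. (h \<rho>)\<^sup>2) \<le> (\<Sum>\<rho>\<in>perms N. (h' \<rho>)\<^sup>2)"
    using continuous_attains_inf[OF compact_averaging_candidates]
      restriction_in_averaging_candidates[OF assms] by blast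
  have "group_avg G f \<sigma> = h \<sigma>" if \<sigma>: "\<sigma> \<in> perms N" for \<sigma>
  proof -
    have "(\<Sum>\<pi>\<in>G. f (\<sigma> \<circ> \<pi>)) = (\<Sum>\<pi>\<in>G. h (\<sigma> \<circ> \<pi>))"
      using h \<sigma> unfolding averaging_candidates_def by auto
    also have "\<dots> = (\<Sum>\<pi>\<in>G. h \<sigma>)"
      using invariant_under_shuffle_group[of h _ \<sigma>] sum_squares_minimiser_invariant[OF h minimal] \<sigma>
      by (intro sum.cong) auto
    also have "\<dots> = real (card G) * h \<sigma>" by simp
    finally show ?thesis unfolding group_avg_def using card_shuffle_group_pos by simp
  qed
  then show ?thesis using that h by blast
qed

lemma increasing_group_avg:
  assumes "increasing_fun N f"
  shows "increasing_fun N (group_avg G f)"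
proof -
  obtain h where "h \<in> averaging_candidates f"
    and avg: "\<And>\<sigma>. \<sigma> \<in> perms N \<Longrightarrow> group_avg G f \<sigma> = h \<sigma>"
    using exists_averaging_candidate_eq_group_avg[OF assms] by blast
  then have "increasing_fun N h" unfolding averaging_candidates_def by blast
  then show ?thesis using avg unfolding increasing_fun_def by simp
qed

lemma sum_group_avg_le:
  assumes "increasing_fun N f" "increasing_set N S"
  shows "sum (group_avg G f) S \<le> sum f S"
proof -
  obtain h where h: "h \<in> averaging_candidates f"
    and avg: "\<And>\<sigma>. \<sigma> \<in> perms N \<Longrightarrow> group_avg G f \<sigma> = h \<sigma>"
    using exists_averaging_candidate_eq_group_avg[OF assms(1)] by blast
  have "sum (group_avg G f) S = sum h S"
    using assms(2) avg unfolding increasing_set_def by (auto intro!: sum.cong)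
  then show ?thesis using h assms(2) unfolding averaging_candidates_def by auto
qed

lemma sum_shuffle_group_inv: "(\<Sum>\<pi>\<in>G. g (inv \<pi>)) = (\<Sum>\<pi>\<in>G. g \<pi>)"
  by (rule sum.reindex_bij_witness[of _ inv inv])
     (auto simp: inv_in_shuffle_group permutes_inv_inv[OF shuffle_group_permutes_block])

lemma step_eq_group_avg:
  assumes \<tau>: "\<tau> \<in> perms N"
  shows "step N E k i \<nu> \<tau> = group_avg G \<nu> \<tau>"
proof -
  have eq: "\<tau> = \<sigma> \<circ> \<pi> \<longleftrightarrow> \<sigma> = \<tau> \<circ> inv \<pi>" if "\<pi> \<in> G" for \<sigma> \<pi>
    using permutes_inv_o[OF shuffle_group_permutes_block[OF that]] by (auto simp: comp_assoc)
  have "(\<Sum>\<sigma>\<in>perms N. \<nu> \<sigma> * real (card {\<pi>\<in>G. \<tau> = \<sigma> \<circ> \<pi>}))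
      = (\<Sum>\<sigma>\<in>perms N. \<Sum>\<pi>\<in>G. if \<tau> = \<sigma> \<circ> \<pi> then \<nu> \<sigma> else 0)"
    by (simp add: real_card_filter_eq_sum[OF finite_shuffle_group] sum_distrib_left if_distrib
        cong: if_cong)
  also have "\<dots> = (\<Sum>\<pi>\<in>G. \<Sum>\<sigma>\<in>perms N. if \<sigma> = \<tau> \<circ> inv \<pi> then \<nu> \<sigma> else 0)"
    by (subst sum.swap) (auto intro!: sum.cong simp: eq)
  also have "\<dots> = (\<Sum>\<pi>\<in>G. \<nu> (\<tau> \<circ> inv \<pi>))"
    using comp_shuffle_in_perms[OF \<tau> inv_in_shuffle_group] by (auto intro!: sum.cong simp: finite_perms)
  also have "\<dots> = (\<Sum>\<pi>\<in>G. \<nu> (\<tau> \<circ> \<pi>))" by (rule sum_shuffle_group_inv)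
  finally show ?thesis unfolding step_def group_avg_def by (simp add: sum_divide_distrib[symmetric])
qed

lemma sum_group_avg_eq:
  assumes S: "S \<subseteq> perms N"
  shows "sum (group_avg G \<nu>) S = (\<Sum>\<sigma>\<in>perms N. \<nu> \<sigma> * real (card {\<pi>\<in>G. \<sigma> \<circ> \<pi> \<in> S})) / real (card G)"
proof -
  have inner: "(\<Sum>\<tau>\<in>S. \<nu> (\<tau> \<circ> inv \<pi>)) = (\<Sum>\<sigma>\<in>perms N. if \<sigma> \<circ> \<pi> \<in> S then \<nu> \<sigma> else 0)"
    if \<pi>: "\<pi> \<in> G" for \<pi>
  proof -
    have "(\<Sum>\<tau>\<in>S. \<nu> (\<tau> \<circ> inv \<pi>)) = (\<Sum>\<tau>\<in>perms N. if \<tau> \<in> S then \<nu> (\<tau> \<circ> inv \<pi>) else 0)"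
      using S finite_perms by (simp add: sum.inter_filter[symmetric] Int_absorb1 flip: Int_def)
    also have "\<dots> = (\<Sum>\<sigma>\<in>perms N. if \<sigma> \<circ> \<pi> \<in> S then \<nu> (\<sigma> \<circ> \<pi> \<circ> inv \<pi>) else 0)"
      using sum_perms_comp[OF shuffle_group_permutes[OF \<pi>],
          of "\<lambda>\<tau>. if \<tau> \<in> S then \<nu> (\<tau> \<circ> inv \<pi>) else 0"] by simp
    also have "\<dots> = (\<Sum>\<sigma>\<in>perms N. if \<sigma> \<circ> \<pi> \<in> S then \<nu> \<sigma> else 0)"
      using permutes_inv_o(1)[OF shuffle_group_permutes_block[OF \<pi>]]
      by (simp add: comp_assoc cong: if_cong)
    finally show ?thesis .
  qed
  have "(\<Sum>\<tau>\<in>S. \<Sum>\<pi>\<in>G. \<nu> (\<tau> \<circ> \<pi>)) = (\<Sum>\<pi>\<in>G. \<Sum>\<tau>\<in>S. \<nu> (\<tau> \<circ> inv \<pi>))"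
    by (simp add: sum_shuffle_group_inv[of "\<lambda>\<pi>. \<nu> (_ \<circ> \<pi>)"] sum.swap[of _ S])
  also have "\<dots> = (\<Sum>\<sigma>\<in>perms N. \<Sum>\<pi>\<in>G. if \<sigma> \<circ> \<pi> \<in> S then \<nu> \<sigma> else 0)"
    using inner by (simp add: sum.swap[of _ G])
  also have "\<dots> = (\<Sum>\<sigma>\<in>perms N. \<nu> \<sigma> * real (card {\<pi>\<in>G. \<sigma> \<circ> \<pi> \<in> S}))"
    by (simp add: real_card_filter_eq_sum[OF finite_shuffle_group] sum_distrib_left if_distrib
        cong: if_cong)
  finally show ?thesis unfolding group_avg_def by (simp add: sum_divide_distrib[symmetric])
qed

lemma group_avg_group_avg_subgroup:
  assumes "H \<subseteq> G" "finite H" "card H > 0"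
  shows "group_avg G (group_avg H f) \<sigma> = group_avg G f \<sigma>"
proof -
  have reindex: "(\<Sum>\<pi>\<in>G. f (\<sigma> \<circ> (\<pi> \<circ> \<rho>))) = (\<Sum>\<pi>\<in>G. f (\<sigma> \<circ> \<pi>))" if "\<rho> \<in> H" for \<rho>
  proof -
    have \<rho>: "\<rho> \<in> G" using that assms by auto
    show ?thesis
      by (rule sum.reindex_bij_witness[of _ "\<lambda>\<pi>. \<pi> \<circ> inv \<rho>" "\<lambda>\<pi>. \<pi> \<circ> \<rho>"])
         (auto simp: comp_assoc permutes_inv_o[OF shuffle_group_permutes_block[OF \<rho>]]
           intro: comp_in_shuffle_group inv_in_shuffle_group \<rho>)
  qed
  have "(\<Sum>\<pi>\<in>G. group_avg H f (\<sigma> \<circ> \<pi>)) = (\<Sum>\<rho>\<in>H. \<Sum>\<pi>\<in>G. f (\<sigma> \<circ> (\<pi> \<circ> \<rho>))) / real (card H)"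
    unfolding group_avg_def by (simp add: sum_divide_distrib[symmetric] comp_assoc sum.swap[of _ G])
  also have "\<dots> = (\<Sum>\<pi>\<in>G. f (\<sigma> \<circ> \<pi>))" using reindex assms(3) by simp
  finally show ?thesis unfolding group_avg_def[of G] by simp
qed

end

section \<open>One update of the censored and uncensored dynamics\<close>

text \<open>Layer-cake decomposition: on the finite set perms N, an increasing c :: nat is the sum of
  the indicators of the increasing sets {c \<ge> j}, 1 \<le> j \<le> max c.\<close>

lemma stoch_dom_sum_mult_le:
  fixes c :: "(nat \<Rightarrow> nat) \<Rightarrow> nat"
  assumes dom: "stoch_dom N \<nu> \<nu>'"
    and c: "\<And>\<sigma> \<sigma>'. \<sigma> \<in> perms N \<Longrightarrow> \<sigma>' \<in> perms N \<Longrightarrow> succeq N \<sigma> \<sigma>' \<Longrightarrow> c \<sigma>' \<le> c \<sigma>"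
  shows "(\<Sum>\<sigma>\<in>perms N. \<nu>' \<sigma> * real (c \<sigma>)) \<le> (\<Sum>\<sigma>\<in>perms N. \<nu> \<sigma> * real (c \<sigma>))"
proof -
  define M where "M = Max (c ` perms N)"
  have layers: "real (c \<sigma>) = (\<Sum>j\<in>{1..M}. if j \<le> c \<sigma> then 1 else 0)" if "\<sigma> \<in> perms N" for \<sigma>
  proof -
    have "c \<sigma> \<le> M" unfolding M_def using that finite_perms by auto
    then have "{j\<in>{1..M}. j \<le> c \<sigma>} = {1..c \<sigma>}" by auto
    then show ?thesis using real_card_filter_eq_sum[of "{1..M}" "\<lambda>j. j \<le> c \<sigma>"] by simp
  qed
  have sum_layers: "(\<Sum>\<sigma>\<in>perms N. \<mu> \<sigma> * real (c \<sigma>)) = (\<Sum>j\<in>{1..M}. sum \<mu> {\<sigma>\<in>perms N. j \<le> c \<sigma>})"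
    for \<mu> :: "(nat \<Rightarrow> nat) \<Rightarrow> real"
  proof -
    have "(\<Sum>\<sigma>\<in>perms N. \<mu> \<sigma> * real (c \<sigma>))
        = (\<Sum>\<sigma>\<in>perms N. \<Sum>j\<in>{1..M}. if j \<le> c \<sigma> then \<mu> \<sigma> else 0)"
      using layers by (auto intro!: sum.cong simp: sum_distrib_left if_distrib cong: if_cong)
    also have "\<dots> = (\<Sum>j\<in>{1..M}. \<Sum>\<sigma>\<in>perms N. if j \<le> c \<sigma> then \<mu> \<sigma> else 0)"
      by (rule sum.swap)
    also have "\<dots> = (\<Sum>j\<in>{1..M}. sum \<mu> {\<sigma>\<in>perms N. j \<le> c \<sigma>})"
      using finite_perms by (simp add: sum.inter_filter)
    finally show ?thesis .
  qed
  have "increasing_set N {\<sigma>\<in>perms N. j \<le> c \<sigma>}" for j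
    unfolding increasing_set_def using c by (auto intro: le_trans)
  then show ?thesis
    unfolding sum_layers using dom unfolding stoch_dom_def by (blast intro: sum_mono)
qed

lemma increasing_step:
  assumes "1 \<le> i" "i + k \<le> N + 1" and "increasing_fun N \<nu>"
  shows "increasing_fun N (step N E k i \<nu>)"
proof -
  interpret block_shuffle N k i E using assms(1,2) by unfold_locales
  show ?thesis
    using increasing_group_avg[OF assms(3)] step_eq_group_avg
    unfolding increasing_fun_def by simp
qed

text \<open>The uncensored group U.G contains the censored group C.G, so averaging over U.G absorbs a
  preceding C.G-average; and the U.G-average of the dominated law is controlled through the
  increasing weights \<sigma> \<mapsto> #{\<pi> \<in> U.G. \<sigma> \<circ> \<pi> \<in> S}.\<close>

lemma stoch_dom_step:
  assumes i: "1 \<le> i" "i + k \<le> N + 1"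
    and inc: "increasing_fun N \<nu>" and dom: "stoch_dom N \<nu> \<nu>'"
  shows "stoch_dom N (step N E k i \<nu>) (step N {} k i \<nu>')"
  unfolding stoch_dom_def
proof (intro allI impI)
  interpret C: block_shuffle N k i E using i by unfold_locales
  interpret U: block_shuffle N k i "{}" using i by unfold_locales
  fix S assume S: "increasing_set N S"
  then have SP: "S \<subseteq> perms N" unfolding increasing_set_def by auto
  have step_sum: "sum (step N E' k i \<mu>) S = sum (group_avg (shuffle_group E' k i) \<mu>) S" for E' \<mu>
    using block_shuffle.step_eq_group_avg[OF block_shuffle.intro[OF i]] SP
    by (intro sum.cong) auto
  define c where "c \<sigma> = card {\<pi>\<in>U.G. \<sigma> \<circ> \<pi> \<in> S}" for \<sigma>
  have "c \<sigma>' \<le> c \<sigma>" if "\<sigma> \<in> perms N" "\<sigma>' \<in> perms N" "succeq N \<sigma> \<sigma>'" for \<sigma> \<sigma>'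
  proof -
    have ind: "increasing_fun N (\<lambda>\<rho>. if \<rho> \<in> S then 1 else 0)"
      using S unfolding increasing_fun_def increasing_set_def by auto
    have "real (c \<rho>) = real (card U.G) * group_avg U.G (\<lambda>\<rho>. if \<rho> \<in> S then 1 else 0) \<rho>" for \<rho>
      unfolding c_def group_avg_def using U.card_shuffle_group_pos
      by (simp add: real_card_filter_eq_sum[OF U.finite_shuffle_group])
    then show ?thesis
      using U.increasing_group_avg[OF ind] that unfolding increasing_fun_def
      by (metis mult_left_mono of_nat_0_le_iff of_nat_le_iff)
  qed
  then have "(\<Sum>\<sigma>\<in>perms N. \<nu>' \<sigma> * real (c \<sigma>)) \<le> (\<Sum>\<sigma>\<in>perms N. \<nu> \<sigma> * real (c \<sigma>))"
    by (rule stoch_dom_sum_mult_le[OF dom])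
  then have "sum (step N {} k i \<nu>') S \<le> sum (group_avg U.G \<nu>) S"
    unfolding step_sum U.sum_group_avg_eq[OF SP] c_def by (simp add: divide_right_mono)
  also have "\<dots> = sum (group_avg U.G (step N E k i \<nu>)) S"
  proof (rule sum.cong)
    fix \<sigma> assume "\<sigma> \<in> S"
    then have "\<sigma> \<circ> \<pi> \<in> perms N" if "\<pi> \<in> U.G" for \<pi>
      using SP U.comp_shuffle_in_perms that by blast
    then have "group_avg U.G (group_avg C.G \<nu>) \<sigma> = group_avg U.G (step N E k i \<nu>) \<sigma>"
      unfolding group_avg_def[of U.G] using C.step_eq_group_avg by (simp cong: sum.cong)
    moreover have "C.G \<subseteq> U.G" unfolding shuffle_group_def same_piece_def by auto
    ultimately show "group_avg U.G \<nu> \<sigma> = group_avg U.G (step N E k i \<nu>) \<sigma>"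
      using U.group_avg_group_avg_subgroup C.finite_shuffle_group C.card_shuffle_group_pos by metis
  qed simp
  also have "\<dots> \<le> sum (step N E k i \<nu>) S"
    by (rule U.sum_group_avg_le[OF increasing_step[OF i inc] S])
  finally show "sum (step N {} k i \<nu>') S \<le> sum (step N E k i \<nu>) S" .
qed

lemma increasing_stoch_dom_foldl_step:
  assumes "\<forall>u\<in>set us. 1 \<le> snd u \<and> snd u + k \<le> N + 1"
    and "increasing_fun N \<nu>" "stoch_dom N \<nu> \<nu>'"
  shows "increasing_fun N (foldl (\<lambda>\<nu> u. step N (C (fst u)) k (snd u) \<nu>) \<nu> us)
    \<and> stoch_dom N (foldl (\<lambda>\<nu> u. step N (C (fst u)) k (snd u) \<nu>) \<nu> us)
        (foldl (\<lambda>\<nu> u. step N {} k (snd u) \<nu>) \<nu>' us)"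
  using assms
proof (induction us arbitrary: \<nu> \<nu>')
  case (Cons u us)
  have "increasing_fun N (step N (C (fst u)) k (snd u) \<nu>)"
    and "stoch_dom N (step N (C (fst u)) k (snd u) \<nu>) (step N {} k (snd u) \<nu>')"
    using increasing_step[of "snd u" k N \<nu>] stoch_dom_step[of "snd u" k N \<nu> \<nu>'] Cons.prems by auto
  then show ?case using Cons.IH Cons.prems(1) by simp
qed simp

lemma increasing_fun_div_mu: "increasing_fun N (\<lambda>\<sigma>. \<nu> \<sigma> / mu N \<sigma>) \<longleftrightarrow> increasing_fun N \<nu>"
  unfolding increasing_fun_def mu_def by simp

theorem lemma3p2:
  fixes N k :: nat and \<nu>0 :: "(nat \<Rightarrow> nat) \<Rightarrow> real" and C :: "real \<Rightarrow> nat set"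
    and us :: "(real \<times> nat) list" and t :: real
  assumes "k \<ge> 3"
    and "is_distribution N \<nu>0"
    and "increasing_fun N (\<lambda>\<sigma>. \<nu>0 \<sigma> / mu N \<sigma>)"
    and "censoring_scheme N C"
    and "update_times N k us"
    and "t \<ge> 0"
  shows "increasing_fun N (\<lambda>\<sigma>. law N k C \<nu>0 us t \<sigma> / mu N \<sigma>)
         \<and> stoch_dom N (law N k C \<nu>0 us t) (law N k (\<lambda>_. {}) \<nu>0 us t)"
proof -
  have "\<forall>u\<in>set (filter (\<lambda>u. fst u \<le> t) us). 1 \<le> snd u \<and> snd u + k \<le> N + 1"
    using assms(5) unfolding update_times_def by auto
  moreover have "increasing_fun N \<nu>0" using assms(3) by (simp add: increasing_fun_div_mu)
  moreover have "stoch_dom N \<nu>0 \<nu>0" unfolding stoch_dom_def by simp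
  ultimately show ?thesis
    unfolding law_def increasing_fun_div_mu by (rule increasing_stoch_dom_foldl_step)
qed

end
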